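(* Let $n\geq 1$ be an integer with $n\neq 2$. Then $K_n\times H$ is type I for every finite simple bipartite graph $H$.
   Context: All graphs are finite and simple. $K_n$ is the complete graph on $n$ vertices. A total colouring of a graph $G$ is an assignment of colours to the vertices and edges of $G$ such that any two adjacent vertices, any two edges sharing an endpoint, and any edge and each of its endpoints receive different colours. The total chromatic number $\chi''(G)$ is the minimum number of colours in a total colouring of $G$. A graph $G$ with maximum degree $\Delta(G)$ is called type I if $\chi''(G)=\Delta(G)+1$. The direct product $G\times H$ has vertex set $V(G)\times V(H)$, with $(u,v)$ adjacent to $(u',v')$ if and only if $uu'\in E(G)$ and $vv'\in E(H)$. *)

theory Defs
  imports Main
begin

type_synonym 'a graph = "'a set \<times> 'a set set"

definition verts :: "'a graph \<Rightarrow> 'a set" where "verts G = fst G"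
definition edges :: "'a graph \<Rightarrow> 'a set set" where "edges G = snd G"

definition finite_simple_graph :: "'a graph \<Rightarrow> bool" where
  "finite_simple_graph G \<longleftrightarrow> finite (verts G) \<and>
     (\<forall>e\<in>edges G. \<exists>u v. e = {u, v} \<and> u \<noteq> v \<and> u \<in> verts G \<and> v \<in> verts G)"

definition adj :: "'a graph \<Rightarrow> 'a \<Rightarrow> 'a \<Rightarrow> bool" where
  "adj G u v \<longleftrightarrow> {u, v} \<in> edges G"

definition degree :: "'a graph \<Rightarrow> 'a \<Rightarrow> nat" where
  "degree G v = card {e \<in> edges G. v \<in> e}"

definition max_degree :: "'a graph \<Rightarrow> nat" where
  "max_degree G = (if verts G = {} then 0 else Max (degree G ` verts G))"

definition bipartite :: "'a graph \<Rightarrow> bool" where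
  "bipartite G \<longleftrightarrow> (\<exists>A B. A \<union> B = verts G \<and> A \<inter> B = {} \<and>
     (\<forall>u v. {u, v} \<in> edges G \<longrightarrow> (u \<in> A \<and> v \<in> B) \<or> (u \<in> B \<and> v \<in> A)))"

definition complete_graph :: "nat \<Rightarrow> nat graph" where
  "complete_graph n = ({0..<n}, {{i, j} | i j. i < n \<and> j < n \<and> i \<noteq> j})"

definition direct_product :: "'a graph \<Rightarrow> 'b graph \<Rightarrow> ('a \<times> 'b) graph" where
  "direct_product G H = (verts G \<times> verts H,
     {{(u, v), (u', v')} | u v u' v'. {u, u'} \<in> edges G \<and> {v, v'} \<in> edges H})"

definition total_colouring :: "'a graph \<Rightarrow> nat \<Rightarrow> ('a \<Rightarrow> nat) \<Rightarrow> ('a set \<Rightarrow> nat) \<Rightarrow> bool" where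
  "total_colouring G k f g \<longleftrightarrow>
     (\<forall>v\<in>verts G. f v < k) \<and> (\<forall>e\<in>edges G. g e < k) \<and>
     (\<forall>u v. {u, v} \<in> edges G \<longrightarrow> f u \<noteq> f v) \<and>
     (\<forall>e\<in>edges G. \<forall>e'\<in>edges G. e \<noteq> e' \<and> e \<inter> e' \<noteq> {} \<longrightarrow> g e \<noteq> g e') \<and>
     (\<forall>e\<in>edges G. \<forall>v\<in>e. g e \<noteq> f v)"

definition total_chromatic_number :: "'a graph \<Rightarrow> nat" where
  "total_chromatic_number G = (LEAST k. \<exists>f g. total_colouring G k f g)"

definition type_I :: "'a graph \<Rightarrow> bool" where
  "type_I G \<longleftrightarrow> total_chromatic_number G = max_degree G + 1"

end

theory Submission
  imports Defs "HOL-Number_Theory.Cong" "HOL-Combinatorics.Transposition"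
begin

text \<open>Colour the vertex \<open>(u, v)\<close> of \<open>K\<^sub>n \<times> H\<close> by \<open>u\<close>. By Konig's theorem the bipartite
  graph \<open>H\<close> has a proper edge colouring with \<open>\<Delta>(H)\<close> colours, and \<open>\<Delta>(K\<^sub>n \<times> H) = (n - 1) \<Delta>(H)\<close>.
  Orient each edge of \<open>H\<close> from the first part to the second. An edge \<open>(u, a) (w, b)\<close> over an
  edge \<open>a b\<close> of colour \<open>0\<close> gets colour \<open>L u w\<close>, where \<open>L\<close> is an idempotent Latin square of
  order \<open>n\<close>, so it avoids the colours \<open>u\<close>, \<open>w\<close> of its ends; over an edge of colour \<open>k > 0\<close>
  it gets the colour \<open>k (n - 1) + ((w - u) mod n)\<close>. This uses \<open>(n - 1) \<Delta>(H) + 1\<close> colours,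
  matching the lower bound \<open>\<Delta> + 1\<close> valid for every graph. For odd \<open>n\<close> the square
  \<open>(u + w) / 2 mod n\<close> is idempotent; for even \<open>n \<ge> 4\<close> it is prolonged from order \<open>n - 1\<close>.\<close>

section \<open>Total colourings and maximum degree\<close>

lemma finite_simple_graph_edgeE:
  assumes "finite_simple_graph G" "e \<in> edges G"
  obtains u v where "e = {u, v}" "u \<noteq> v" "u \<in> verts G" "v \<in> verts G"
  using assms unfolding finite_simple_graph_def by blast

lemma finite_simple_graph_finite_verts: "finite_simple_graph G \<Longrightarrow> finite (verts G)"
  unfolding finite_simple_graph_def by blast

lemma finite_simple_graph_finite_edges:
  assumes "finite_simple_graph G"
  shows "finite (edges G)"
proof (rule finite_subset)
  show "edges G \<subseteq> Pow (verts G)"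
    by (auto elim: finite_simple_graph_edgeE[OF assms])
qed (simp add: finite_simple_graph_finite_verts[OF assms])

lemma degree_le_max_degree:
  assumes "finite_simple_graph G"
  shows "degree G v \<le> max_degree G"
proof (cases "v \<in> verts G")
  case True
  then show ?thesis
    using finite_simple_graph_finite_verts[OF assms] unfolding max_degree_def by auto
next
  case False
  then have "{e \<in> edges G. v \<in> e} = {}"
    by (auto elim: finite_simple_graph_edgeE[OF assms])
  then show ?thesis unfolding degree_def by (metis card.empty zero_le)
qed

lemma max_degree_attained:
  assumes "finite_simple_graph G" "verts G \<noteq> {}"
  obtains v where "v \<in> verts G" "degree G v = max_degree G"
proof -
  have "max_degree G \<in> degree G ` verts G"
    using assms finite_simple_graph_finite_verts[OF assms(1)] unfolding max_degree_def by simp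
  then show ?thesis using that by auto
qed

lemma max_degree_pos:
  assumes "finite_simple_graph H" "edges H \<noteq> {}"
  shows "0 < max_degree H"
proof -
  obtain e where "e \<in> edges H" using assms(2) by blast
  then obtain u v where "e = {u, v}" using finite_simple_graph_edgeE[OF assms(1)] by blast
  then have "e \<in> {e \<in> edges H. u \<in> e}" using \<open>e \<in> edges H\<close> by simp
  then have "0 < degree H u"
    unfolding degree_def using finite_simple_graph_finite_edges[OF assms(1)] by (auto simp: card_gt_0_iff)
  then show ?thesis using degree_le_max_degree[OF assms(1), of u] by linarith
qed

lemma max_degree_less_total_colours:
  assumes "finite_simple_graph G" "verts G \<noteq> {}" "total_colouring G k f g"
  shows "max_degree G < k"
proof -
  obtain x where x: "x \<in> verts G" "degree G x = max_degree G"
    using max_degree_attained[OF assms(1,2)] .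
  define Ex where "Ex = {e \<in> edges G. x \<in> e}"
  have "finite Ex"
    using finite_simple_graph_finite_edges[OF assms(1)] unfolding Ex_def by simp
  moreover have "inj_on g Ex" "f x \<notin> g ` Ex" "insert (f x) (g ` Ex) \<subseteq> {..<k}"
    using assms(3) x(1) unfolding total_colouring_def inj_on_def Ex_def by fastforce+
  ultimately have "card Ex + 1 \<le> k"
    using card_mono[of "{..<k}" "insert (f x) (g ` Ex)"] by (simp add: card_image)
  then show ?thesis using x(2) unfolding degree_def Ex_def by simp
qed

lemma type_I_if_total_colouring:
  assumes "finite_simple_graph G" "verts G \<noteq> {}"
    and "total_colouring G k f g" "k \<le> max_degree G + 1"
  shows "type_I G"
proof -
  have "total_colouring G (max_degree G + 1) f g"
    using assms(3,4) unfolding total_colouring_def by (meson order_less_le_trans)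
  then have "(LEAST k. \<exists>f g. total_colouring G k f g) = max_degree G + 1"
    using max_degree_less_total_colours[OF assms(1,2)]
    by (intro Least_equality) (auto simp: Suc_le_eq)
  then show ?thesis unfolding type_I_def total_chromatic_number_def .
qed

section \<open>Konig's edge colouring theorem\<close>

definition proper_edge_colouring :: "'a set set \<Rightarrow> ('a set \<Rightarrow> nat) \<Rightarrow> nat \<Rightarrow> bool" where
  "proper_edge_colouring E c k \<longleftrightarrow>
     (\<forall>e\<in>E. c e < k) \<and> (\<forall>e\<in>E. \<forall>e'\<in>E. e \<noteq> e' \<and> e \<inter> e' \<noteq> {} \<longrightarrow> c e \<noteq> c e')"

definition colour_missing :: "'a set set \<Rightarrow> ('a set \<Rightarrow> nat) \<Rightarrow> 'a \<Rightarrow> nat \<Rightarrow> bool" where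
  "colour_missing E c v \<alpha> \<longleftrightarrow> (\<forall>e\<in>E. v \<in> e \<longrightarrow> c e \<noteq> \<alpha>)"

lemma proper_edge_colouring_eq:
  "proper_edge_colouring E c k \<Longrightarrow> e \<in> E \<Longrightarrow> e' \<in> E \<Longrightarrow> e \<inter> e' \<noteq> {} \<Longrightarrow> c e = c e' \<Longrightarrow> e = e'"
  unfolding proper_edge_colouring_def by blast

lemma colour_missing_exists:
  assumes "finite E" "card {e \<in> E. v \<in> e} < k"
  obtains \<alpha> where "\<alpha> < k" "colour_missing E c v \<alpha>"
proof -
  have "card (c ` {e \<in> E. v \<in> e}) < card {..<k}"
    using card_image_le[of "{e \<in> E. v \<in> e}" c] assms by simp
  then have "\<not> {..<k} \<subseteq> c ` {e \<in> E. v \<in> e}"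
    using assms(1) card_mono[of "c ` {e \<in> E. v \<in> e}" "{..<k}"] by auto
  then show ?thesis using that unfolding colour_missing_def by blast
qed

lemma proper_edge_colouring_insert:
  assumes "proper_edge_colouring E c k" "\<gamma> < k"
    and "colour_missing E c x \<gamma>" "colour_missing E c y \<gamma>"
  shows "proper_edge_colouring (insert {x, y} E) (c({x, y} := \<gamma>)) k"
  unfolding proper_edge_colouring_def
proof (intro conjI ballI impI)
  fix e assume "e \<in> insert {x, y} E"
  then show "(c({x, y} := \<gamma>)) e < k" using assms(1,2) unfolding proper_edge_colouring_def by auto
next
  fix e e' assume "e \<in> insert {x, y} E" "e' \<in> insert {x, y} E" and ne: "e \<noteq> e' \<and> e \<inter> e' \<noteq> {}"
  then consider "e = {x, y}" "e' \<in> E" | "e' = {x, y}" "e \<in> E" | "e \<in> E" "e' \<in> E" "e \<noteq> {x, y}" "e' \<noteq> {x, y}"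
    by blast
  then show "(c({x, y} := \<gamma>)) e \<noteq> (c({x, y} := \<gamma>)) e'"
  proof cases
    case 1
    then show ?thesis using ne assms(3,4) unfolding colour_missing_def by auto
  next
    case 2
    then show ?thesis using ne assms(3,4) unfolding colour_missing_def by auto
  next
    case 3
    then show ?thesis using ne assms(1) unfolding proper_edge_colouring_def by simp
  qed
qed

lemma proper_edge_colouring_swap:
  assumes proper: "proper_edge_colouring E c k" and "\<alpha> < k" "\<beta> < k"
    and closed: "\<And>e. e \<in> E \<Longrightarrow> e \<inter> K \<noteq> {} \<Longrightarrow> c e \<in> {\<alpha>, \<beta>} \<Longrightarrow> e \<subseteq> K"
  defines "c' \<equiv> \<lambda>e. if e \<inter> K \<noteq> {} then transpose \<alpha> \<beta> (c e) else c e"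
  shows "proper_edge_colouring E c' k"
    and "\<And>e z. e \<in> E \<Longrightarrow> z \<in> e \<Longrightarrow> z \<notin> K \<Longrightarrow> c' e = c e"
proof -
  show unchanged: "c' e = c e" if "e \<in> E" "z \<in> e" "z \<notin> K" for e z
  proof (cases "e \<inter> K \<noteq> {} \<and> c e \<in> {\<alpha>, \<beta>}")
    case True
    then show ?thesis using closed[OF that(1)] that(2,3) by blast
  next
    case False
    then show ?thesis unfolding c'_def by auto
  qed
  show "proper_edge_colouring E c' k"
    unfolding proper_edge_colouring_def
  proof (intro conjI ballI impI)
    fix e assume "e \<in> E"
    then show "c' e < k"
      using proper \<open>\<alpha> < k\<close> \<open>\<beta> < k\<close> unfolding proper_edge_colouring_def c'_def transpose_def by auto
  next
    fix e e' assume e: "e \<in> E" "e' \<in> E" and ne: "e \<noteq> e' \<and> e \<inter> e' \<noteq> {}"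
    then have "c e \<noteq> c e'" using proper unfolding proper_edge_colouring_def by blast
    obtain z where z: "z \<in> e" "z \<in> e'" using ne by blast
    show "c' e \<noteq> c' e'"
    proof (cases "z \<in> K")
      case True
      then have "c' e = transpose \<alpha> \<beta> (c e)" "c' e' = transpose \<alpha> \<beta> (c e')"
        using z unfolding c'_def by auto
      then show ?thesis using \<open>c e \<noteq> c e'\<close> transpose_eq_imp_eq by metis
    next
      case False
      then show ?thesis using unchanged[OF e(1) z(1)] unchanged[OF e(2) z(2)] \<open>c e \<noteq> c e'\<close> by simp
    qed
  qed
qed

text \<open>\<open>kempe_walk F c \<alpha> \<beta> y w \<gamma>\<close>: some walk from \<open>y\<close> to \<open>w\<close> uses edges coloured
  \<open>\<alpha>, \<beta>, \<alpha>, \<dots>\<close> in turn, and \<open>\<gamma>\<close> is the colour its next edge would have.\<close>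

inductive kempe_walk :: "'a set set \<Rightarrow> ('a set \<Rightarrow> nat) \<Rightarrow> nat \<Rightarrow> nat \<Rightarrow> 'a \<Rightarrow> 'a \<Rightarrow> nat \<Rightarrow> bool"
  for F c \<alpha> \<beta> y where
  start: "kempe_walk F c \<alpha> \<beta> y y \<alpha>"
| extend: "kempe_walk F c \<alpha> \<beta> y w \<gamma> \<Longrightarrow> {w, w'} \<in> F \<Longrightarrow> c {w, w'} = \<gamma> \<Longrightarrow>
    kempe_walk F c \<alpha> \<beta> y w' (transpose \<alpha> \<beta> \<gamma>)"

lemma kempe_walk_colour: "kempe_walk F c \<alpha> \<beta> y w \<gamma> \<Longrightarrow> \<gamma> \<in> {\<alpha>, \<beta>}"
  by (induction rule: kempe_walk.induct) auto

lemma kempe_walk_side: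
  assumes "kempe_walk F c \<alpha> \<beta> y w \<gamma>" "\<alpha> \<noteq> \<beta>" "A \<inter> B = {}" "y \<in> B"
    and cross: "\<forall>e\<in>F. \<exists>a b. e = {a, b} \<and> a \<in> A \<and> b \<in> B"
  shows "w \<in> A \<union> B \<and> (w \<in> B \<longleftrightarrow> \<gamma> = \<alpha>)"
  using assms(1)
proof (induction rule: kempe_walk.induct)
  case start
  then show ?case using assms(4) by blast
next
  case (extend w \<gamma> w')
  have "\<gamma> = \<alpha> \<or> \<gamma> = \<beta>" using kempe_walk_colour[OF extend(1)] by blast
  moreover obtain a b where ab: "{w, w'} = {a, b}" "a \<in> A" "b \<in> B" using extend(2) cross by blast
  then have "w = a \<and> w' = b \<or> w = b \<and> w' = a" by (auto simp: doubleton_eq_iff)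
  ultimately show ?case using extend.IH ab(2,3) assms(2,3) by auto
qed

lemma kempe_walk_entry:
  assumes "kempe_walk F c \<alpha> \<beta> y w \<gamma>"
  shows "(w = y \<and> \<gamma> = \<alpha>) \<or>
    (\<exists>w0. kempe_walk F c \<alpha> \<beta> y w0 (transpose \<alpha> \<beta> \<gamma>) \<and> {w0, w} \<in> F \<and> c {w0, w} = transpose \<alpha> \<beta> \<gamma>)"
  using assms
proof (cases rule: kempe_walk.cases)
  case (extend w0 \<gamma>0)
  then show ?thesis by (metis transpose_involutory)
qed simp

text \<open>The only edge of the other colour at the end of a walk is the edge the walk
  arrived by, since the colouring is proper and \<open>\<beta>\<close> is missing at the start.\<close>

lemma kempe_walk_closed:
  assumes proper: "proper_edge_colouring F c k" and "colour_missing F c y \<beta>"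
    and walk: "kempe_walk F c \<alpha> \<beta> y w \<gamma>" and edge: "{w, w'} \<in> F" "c {w, w'} \<in> {\<alpha>, \<beta>}"
  shows "\<exists>\<gamma>'. kempe_walk F c \<alpha> \<beta> y w' \<gamma>'"
proof (cases "c {w, w'} = \<gamma>")
  case True
  then show ?thesis using kempe_walk.extend[OF walk edge(1)] by blast
next
  case False
  then have other: "c {w, w'} = transpose \<alpha> \<beta> \<gamma>"
    using kempe_walk_colour[OF walk] edge(2) by (auto simp: transpose_def)
  from kempe_walk_entry[OF walk] show ?thesis
  proof (elim disjE exE conjE)
    assume "w = y" "\<gamma> = \<alpha>"
    then show ?thesis using other edge(1) \<open>colour_missing F c y \<beta>\<close> unfolding colour_missing_def by auto
  next
    fix w0 assume w0: "kempe_walk F c \<alpha> \<beta> y w0 (transpose \<alpha> \<beta> \<gamma>)" "{w0, w} \<in> F"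
      "c {w0, w} = transpose \<alpha> \<beta> \<gamma>"
    have "{w0, w} = {w, w'}"
      using proper_edge_colouring_eq[OF proper w0(2) edge(1)] w0(3) other by auto
    then have "w' = w0 \<or> w' = w" by (auto simp: doubleton_eq_iff)
    then show ?thesis using w0(1) walk by blast
  qed
qed

lemma kempe_chain_interchange:
  assumes disj: "A \<inter> B = {}" and cross: "\<forall>e\<in>F. \<exists>a b. e = {a, b} \<and> a \<in> A \<and> b \<in> B"
    and proper: "proper_edge_colouring F c k" and "\<alpha> < k" "\<beta> < k" "\<alpha> \<noteq> \<beta>"
    and "x \<in> A" "y \<in> B" and mx: "colour_missing F c x \<alpha>" and my: "colour_missing F c y \<beta>"
  obtains c' where "proper_edge_colouring F c' k" "colour_missing F c' x \<alpha>" "colour_missing F c' y \<alpha>"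
proof -
  define K where "K = {w. \<exists>\<gamma>. kempe_walk F c \<alpha> \<beta> y w \<gamma>}"
  have closed: "e \<subseteq> K" if e: "e \<in> F" "e \<inter> K \<noteq> {}" "c e \<in> {\<alpha>, \<beta>}" for e
  proof -
    have "b \<in> K" if "a \<in> K" "{a, b} \<in> F" "c {a, b} \<in> {\<alpha>, \<beta>}" for a b
    proof -
      obtain \<gamma> where "kempe_walk F c \<alpha> \<beta> y a \<gamma>" using \<open>a \<in> K\<close> unfolding K_def by auto
      then show ?thesis using kempe_walk_closed[OF proper my _ that(2,3)] unfolding K_def by auto
    qed
    moreover obtain a b where "e = {a, b}" using cross e(1) by blast
    ultimately show ?thesis using e by (auto simp: insert_commute)
  qed
  have "y \<in> K" unfolding K_def using kempe_walk.start[of F c \<alpha> \<beta> y] by auto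
  have "x \<notin> K"
  proof
    assume "x \<in> K"
    then obtain \<gamma> where walk: "kempe_walk F c \<alpha> \<beta> y x \<gamma>" unfolding K_def by auto
    have "x \<notin> B" using \<open>x \<in> A\<close> disj by blast
    then have "\<gamma> \<noteq> \<alpha>"
      using kempe_walk_side[OF walk \<open>\<alpha> \<noteq> \<beta>\<close> disj \<open>y \<in> B\<close> cross] by blast
    then have "transpose \<alpha> \<beta> \<gamma> = \<alpha>" using kempe_walk_colour[OF walk] by auto
    moreover have "x \<noteq> y" using \<open>x \<notin> B\<close> \<open>y \<in> B\<close> by blast
    ultimately obtain w0 where "{w0, x} \<in> F" "c {w0, x} = \<alpha>"
      using kempe_walk_entry[OF walk] by auto
    then show False using mx unfolding colour_missing_def by blast
  qed
  define c' where "c' = (\<lambda>e. if e \<inter> K \<noteq> {} then transpose \<alpha> \<beta> (c e) else c e)"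
  note swap = proper_edge_colouring_swap[OF proper \<open>\<alpha> < k\<close> \<open>\<beta> < k\<close> closed, folded c'_def]
  show ?thesis
  proof (rule that)
    show "proper_edge_colouring F c' k" using swap(1) .
    show "colour_missing F c' x \<alpha>"
      using swap(2)[of _ x] \<open>x \<notin> K\<close> mx unfolding colour_missing_def c'_def by simp
    show "colour_missing F c' y \<alpha>"
      unfolding colour_missing_def
    proof (intro ballI impI)
      fix e assume "e \<in> F" "y \<in> e"
      then have "c' e = transpose \<alpha> \<beta> (c e)" "c e \<noteq> \<beta>"
        using \<open>y \<in> K\<close> my unfolding c'_def colour_missing_def by auto
      then show "c' e \<noteq> \<alpha>" by (auto simp: transpose_eq_iff)
    qed
  qed
qed

theorem konig_edge_colouring:
  assumes "finite E" "A \<inter> B = {}" and cross: "\<forall>e\<in>E. \<exists>a b. e = {a, b} \<and> a \<in> A \<and> b \<in> B"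
    and deg: "\<And>v. card {e \<in> E. v \<in> e} \<le> k"
  obtains c where "proper_edge_colouring E c k"
proof -
  have "F \<subseteq> E \<Longrightarrow> \<exists>c. proper_edge_colouring F c k" if "finite F" for F
    using that
  proof (induction F rule: finite_induct)
    case empty
    then show ?case unfolding proper_edge_colouring_def by auto
  next
    case (insert e F)
    then obtain c where c: "proper_edge_colouring F c k" by blast
    have "e \<in> E" "F \<subseteq> E" using insert(4) by simp_all
    then obtain x y where e: "e = {x, y}" "x \<in> A" "y \<in> B" using cross by blast
    have cross_F: "\<forall>e\<in>F. \<exists>a b. e = {a, b} \<and> a \<in> A \<and> b \<in> B" using cross \<open>F \<subseteq> E\<close> by blast
    have free: "card {e' \<in> F. v \<in> e'} < k" if "v \<in> e" for v
    proof -
      have "{e' \<in> F. v \<in> e'} \<subset> {e' \<in> E. v \<in> e'}" using insert(2) \<open>e \<in> E\<close> \<open>F \<subseteq> E\<close> that by blast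
      then have "card {e' \<in> F. v \<in> e'} < card {e' \<in> E. v \<in> e'}"
        using \<open>finite E\<close> by (simp add: psubset_card_mono)
      then show ?thesis using deg[of v] by simp
    qed
    have "x \<in> e" "y \<in> e" using e(1) by simp_all
    obtain \<alpha> where \<alpha>: "\<alpha> < k" "colour_missing F c x \<alpha>"
      by (rule colour_missing_exists[OF insert(1) free[OF \<open>x \<in> e\<close>]])
    obtain \<beta> where \<beta>: "\<beta> < k" "colour_missing F c y \<beta>"
      by (rule colour_missing_exists[OF insert(1) free[OF \<open>y \<in> e\<close>]])
    obtain c' where c': "proper_edge_colouring F c' k" "colour_missing F c' x \<alpha>" "colour_missing F c' y \<alpha>"
    proof (cases "\<alpha> = \<beta>")
      case True
      then show ?thesis using that[OF c] \<alpha> \<beta> by simp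
    next
      case False
      show ?thesis
        by (rule kempe_chain_interchange[OF \<open>A \<inter> B = {}\<close> cross_F c \<alpha>(1) \<beta>(1) False e(2,3) \<alpha>(2) \<beta>(2)])
          (rule that)
    qed
    then show ?case using proper_edge_colouring_insert[OF c'(1) \<alpha>(1) c'(2,3)] unfolding e(1) by blast
  qed
  then obtain c where "proper_edge_colouring E c k" using \<open>finite E\<close> by blast
  then show ?thesis by (rule that)
qed

lemma bipartite_crossing:
  assumes "finite_simple_graph H" "bipartite H"
  obtains A B where "A \<inter> B = {}" "\<forall>e\<in>edges H. \<exists>a b. e = {a, b} \<and> a \<in> A \<and> b \<in> B"
proof -
  obtain A B where "A \<union> B = verts H" "A \<inter> B = {}"
    and parts: "\<forall>u v. {u, v} \<in> edges H \<longrightarrow> (u \<in> A \<and> v \<in> B) \<or> (u \<in> B \<and> v \<in> A)"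
    using assms(2) unfolding bipartite_def by (elim exE conjE)
  have "\<exists>a b. e = {a, b} \<and> a \<in> A \<and> b \<in> B" if e: "e \<in> edges H" for e
  proof -
    obtain u v where uv: "e = {u, v}" using finite_simple_graph_edgeE[OF assms(1) e] by blast
    then have "(u \<in> A \<and> v \<in> B) \<or> (u \<in> B \<and> v \<in> A)" using parts e by simp
    moreover have "e = {v, u}" using uv by (simp add: insert_commute)
    ultimately show ?thesis using uv by blast
  qed
  then show ?thesis using that \<open>A \<inter> B = {}\<close> by blast
qed

section \<open>Idempotent Latin squares\<close>

definition idempotent_latin_square :: "nat \<Rightarrow> (nat \<Rightarrow> nat \<Rightarrow> nat) \<Rightarrow> bool" where
  "idempotent_latin_square n L \<longleftrightarrow>
     (\<forall>u<n. L u u = u) \<and> (\<forall>u<n. \<forall>w<n. L u w < n) \<and>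
     (\<forall>u<n. inj_on (L u) {..<n}) \<and> (\<forall>w<n. inj_on (\<lambda>u. L u w) {..<n})"

lemma idempotent_latin_square_off_diagonal:
  assumes "idempotent_latin_square n L" "u < n" "w < n" "u \<noteq> w"
  shows "L u w \<noteq> u" "L u w \<noteq> w"
  using assms unfolding idempotent_latin_square_def inj_on_def by (metis lessThan_iff)+

lemma idempotent_latin_square_lines:
  assumes "idempotent_latin_square n L" "u < n"
  shows "L u u = u" "inj_on (L u) {..<n}" "inj_on (\<lambda>v. L v u) {..<n}"
    "L u ` {..<n} \<subseteq> {..<n}" "(\<lambda>v. L v u) ` {..<n} \<subseteq> {..<n}"
  using assms unfolding idempotent_latin_square_def by auto

definition midpoint_mod :: "nat \<Rightarrow> nat \<Rightarrow> nat \<Rightarrow> nat" where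
  "midpoint_mod q u w = (u + w) * ((q + 1) div 2) mod q"

lemma midpoint_mod_eq_iff:
  assumes "odd q"
  shows "midpoint_mod q a b = midpoint_mod q c d \<longleftrightarrow> [a + b = c + d] (mod q)"
proof -
  have "2 * ((q + 1) div 2) = Suc q" using assms by (auto elim: oddE)
  then have "coprime ((q + 1) div 2) q" using coprime_Suc_left_nat[of q] by (metis coprime_mult_left_iff)
  then show ?thesis unfolding midpoint_mod_def cong_def[symmetric] by (rule cong_mult_rcancel_nat)
qed

lemma midpoint_mod_diagonal:
  assumes "odd q" "u < q"
  shows "midpoint_mod q u u = u"
proof -
  have "(u + u) * ((q + 1) div 2) = u * (2 * ((q + 1) div 2))" by simp
  also have "\<dots> = u + u * q" using assms(1) by (auto elim: oddE)
  finally show ?thesis using assms(2) unfolding midpoint_mod_def by simp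
qed

lemma idempotent_latin_square_midpoint_mod:
  assumes "odd q"
  shows "idempotent_latin_square q (midpoint_mod q)"
proof -
  have "u1 = u2" if "[a + u1 = a + u2] (mod q)" "u1 < q" "u2 < q" for a u1 u2
    using that cong_add_lcancel_nat cong_less_modulus_unique_nat by blast
  then show ?thesis
    unfolding idempotent_latin_square_def inj_on_def
    using midpoint_mod_diagonal[OF assms] midpoint_mod_eq_iff[OF assms]
    by (auto simp: midpoint_mod_def add.commute)
qed

lemma inj_on_lessThan_Suc_fix_last:
  assumes "inj_on f {..<q}" "f ` {..<q} \<subseteq> {..<q}" "f q = q"
  shows "inj_on f {..<Suc q}"
  using assms unfolding lessThan_Suc by (auto simp: inj_on_insert)

lemma inj_on_lessThan_Suc_exchange:
  assumes g: "inj_on g {..<q}" "g ` {..<q} \<subseteq> {..<q}" and "z < q" "f z = q"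
    and f: "\<And>x. x < Suc q \<Longrightarrow> x \<noteq> z \<Longrightarrow> f x = g (if x = q then z else x)"
  shows "inj_on f {..<Suc q}"
proof (rule inj_onI)
  fix x1 x2 assume x: "x1 \<in> {..<Suc q}" "x2 \<in> {..<Suc q}" "f x1 = f x2"
  have below: "f x < q" if "x < Suc q" "x \<noteq> z" for x
    using f[OF that] g(2) \<open>z < q\<close> that(1) by (auto simp: less_Suc_eq)
  show "x1 = x2"
  proof (cases "x1 = z \<or> x2 = z")
    case True
    then show ?thesis using x below \<open>f z = q\<close> by (metis lessThan_iff less_irrefl)
  next
    case False
    then have "(if x1 = q then z else x1) = (if x2 = q then z else x2)"
      using x f g(1) \<open>z < q\<close> unfolding inj_on_def by (auto simp: less_Suc_eq)
    then show ?thesis using False by (auto split: if_splits)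
  qed
qed

text \<open>The prolongation of an idempotent Latin square of order \<open>q\<close> along the transversal
  \<open>{(u, \<sigma> u)}\<close>: the entries on the transversal move to the new row and column, and
  are replaced by the new symbol \<open>q\<close>.\<close>

definition prolongation :: "nat \<Rightarrow> (nat \<Rightarrow> nat \<Rightarrow> nat) \<Rightarrow> (nat \<Rightarrow> nat) \<Rightarrow> nat \<Rightarrow> nat \<Rightarrow> nat" where
  "prolongation q M \<sigma> u w =
     (if u = w then u
      else if u = q then M (inv_into {..<q} \<sigma> w) w
      else if w = q then M u (\<sigma> u)
      else if w = \<sigma> u then q
      else M u w)"

context
  fixes q M \<sigma>
  assumes M: "idempotent_latin_square q M"
    and \<sigma>: "bij_betw \<sigma> {..<q} {..<q}" "\<And>u. u < q \<Longrightarrow> \<sigma> u \<noteq> u"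
    and transversal: "inj_on (\<lambda>u. M u (\<sigma> u)) {..<q}"
begin

lemma permutation_inverse:
  assumes "u < q"
  shows "\<sigma> u < q" "inv_into {..<q} \<sigma> u < q" "\<sigma> (inv_into {..<q} \<sigma> u) = u" "inv_into {..<q} \<sigma> (\<sigma> u) = u"
  using assms bij_betw_apply[OF \<sigma>(1)] bij_betw_apply[OF bij_betw_inv_into[OF \<sigma>(1)]]
    bij_betw_inv_into_right[OF \<sigma>(1)] bij_betw_inv_into_left[OF \<sigma>(1)] by auto

lemma transversal_range: "(\<lambda>u. M u (\<sigma> u)) ` {..<q} \<subseteq> {..<q}"
  using M permutation_inverse(1) unfolding idempotent_latin_square_def by auto

lemma inj_on_prolongation_row:
  assumes "u < Suc q"
  shows "inj_on (prolongation q M \<sigma> u) {..<Suc q}"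
proof (cases "u = q")
  case True
  let ?\<rho> = "inv_into {..<q} \<sigma>"
  have "inj_on ((\<lambda>v. M v (\<sigma> v)) \<circ> ?\<rho>) {..<q}"
  proof (rule comp_inj_on)
    show "inj_on ?\<rho> {..<q}" using bij_betw_imp_inj_on[OF bij_betw_inv_into[OF \<sigma>(1)]] .
    show "inj_on (\<lambda>v. M v (\<sigma> v)) (?\<rho> ` {..<q})"
      by (rule inj_on_subset[OF transversal]) (use permutation_inverse(2) in auto)
  qed
  then have "inj_on (prolongation q M \<sigma> u) {..<q}"
    by (rule inj_on_cong[THEN iffD1, rotated]) (auto simp: True prolongation_def permutation_inverse(3))
  moreover have "prolongation q M \<sigma> u ` {..<q} \<subseteq> {..<q}"
  proof (rule image_subsetI)
    fix w assume "w \<in> {..<q}"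
    then have "prolongation q M \<sigma> u w = M (?\<rho> w) (\<sigma> (?\<rho> w))" "?\<rho> w < q"
      using permutation_inverse(2,3) True unfolding prolongation_def by auto
    then show "prolongation q M \<sigma> u w \<in> {..<q}" using transversal_range by auto
  qed
  ultimately show ?thesis by (rule inj_on_lessThan_Suc_fix_last) (simp add: True prolongation_def)
next
  case False
  then have "u < q" using assms by simp
  note lines = idempotent_latin_square_lines[OF M \<open>u < q\<close>]
  show ?thesis
  proof (rule inj_on_lessThan_Suc_exchange[OF lines(2,4)])
    show "\<sigma> u < q" "prolongation q M \<sigma> u (\<sigma> u) = q"
      using \<open>u < q\<close> permutation_inverse(1) \<sigma>(2)[OF \<open>u < q\<close>] unfolding prolongation_def by auto
    show "prolongation q M \<sigma> u x = M u (if x = q then \<sigma> u else x)" if "x < Suc q" "x \<noteq> \<sigma> u" for x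
      using that \<open>u < q\<close> lines(1) unfolding prolongation_def by auto
  qed
qed

lemma inj_on_prolongation_column:
  assumes "w < Suc q"
  shows "inj_on (\<lambda>v. prolongation q M \<sigma> v w) {..<Suc q}"
proof (cases "w = q")
  case True
  have "inj_on (\<lambda>v. prolongation q M \<sigma> v w) {..<q}"
    using transversal by (rule inj_on_cong[THEN iffD1, rotated]) (auto simp: True prolongation_def)
  moreover have "(\<lambda>v. prolongation q M \<sigma> v w) ` {..<q} \<subseteq> {..<q}"
    using transversal_range True unfolding prolongation_def by auto
  ultimately show ?thesis by (rule inj_on_lessThan_Suc_fix_last) (simp add: True prolongation_def)
next
  case False
  then have "w < q" using assms by simp
  let ?\<rho> = "inv_into {..<q} \<sigma>"
  note lines = idempotent_latin_square_lines[OF M \<open>w < q\<close>]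
  show ?thesis
  proof (rule inj_on_lessThan_Suc_exchange[OF lines(3,5)])
    show "?\<rho> w < q" "prolongation q M \<sigma> (?\<rho> w) w = q"
      using \<open>w < q\<close> permutation_inverse(2,3)[OF \<open>w < q\<close>] \<sigma>(2)[of "?\<rho> w"] unfolding prolongation_def by auto
    show "prolongation q M \<sigma> x w = M (if x = q then ?\<rho> w else x) w" if "x < Suc q" "x \<noteq> ?\<rho> w" for x
      using that \<open>w < q\<close> lines(1) permutation_inverse(4)[of x] unfolding prolongation_def by auto
  qed
qed

lemma idempotent_latin_square_prolongation: "idempotent_latin_square (Suc q) (prolongation q M \<sigma>)"
proof -
  have "prolongation q M \<sigma> u w < Suc q" if "u < Suc q" "w < Suc q" for u w
    using that M permutation_inverse(1,2) unfolding prolongation_def idempotent_latin_square_def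
    by (auto simp: less_Suc_eq)
  then show ?thesis
    using inj_on_prolongation_row inj_on_prolongation_column
    unfolding idempotent_latin_square_def by (simp add: prolongation_def)
qed

end

lemma bij_betw_Suc_mod: "bij_betw (\<lambda>u. Suc u mod q) {..<q} {..<q}"
proof (cases "q = 0")
  case False
  have "inj_on (\<lambda>u. Suc u mod q) {..<q}"
  proof (rule inj_onI)
    fix u v assume "u \<in> {..<q}" "v \<in> {..<q}" "Suc u mod q = Suc v mod q"
    then have "[u + 1 = v + 1] (mod q)" "u < q" "v < q" unfolding cong_def by simp_all
    then show "u = v" using cong_add_rcancel_nat cong_less_modulus_unique_nat by blast
  qed
  moreover have "(\<lambda>u. Suc u mod q) ` {..<q} \<subseteq> {..<q}" using False by auto
  ultimately show ?thesis unfolding bij_betw_def using endo_inj_surj by blast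
qed simp

lemma idempotent_latin_square_prolongation_midpoint_mod:
  assumes "odd q" "3 \<le> q"
  shows "idempotent_latin_square (Suc q) (prolongation q (midpoint_mod q) (\<lambda>u. Suc u mod q))"
proof (rule idempotent_latin_square_prolongation)
  show "idempotent_latin_square q (midpoint_mod q)"
    using assms(1) by (rule idempotent_latin_square_midpoint_mod)
  show "bij_betw (\<lambda>u. Suc u mod q) {..<q} {..<q}" by (rule bij_betw_Suc_mod)
  show "Suc u mod q \<noteq> u" if "u < q" for u
  proof (cases "Suc u < q")
    case False
    then have "Suc u = q" using that by simp
    then show ?thesis using assms(2) by simp
  qed simp
  show "inj_on (\<lambda>u. midpoint_mod q u (Suc u mod q)) {..<q}"
  proof (rule inj_onI)
    fix u v assume uv: "u \<in> {..<q}" "v \<in> {..<q}"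
      and "midpoint_mod q u (Suc u mod q) = midpoint_mod q v (Suc v mod q)"
    then have "[u + Suc u mod q = v + Suc v mod q] (mod q)" using midpoint_mod_eq_iff[OF assms(1)] by simp
    then have "[2 * u + 1 = 2 * v + 1] (mod q)" by (simp add: cong_def mod_add_right_eq mult_2)
    then have "[2 * u = 2 * v] (mod q)" using cong_add_rcancel_nat by blast
    moreover have "coprime 2 q" using assms(1) by (simp add: coprime_commute)
    ultimately have "[u = v] (mod q)" using cong_mult_lcancel_nat by blast
    then show "u = v" using uv cong_less_modulus_unique_nat by auto
  qed
qed

lemma idempotent_latin_square_exists:
  assumes "n \<noteq> 2"
  obtains L where "idempotent_latin_square n L"
proof (cases "odd n")
  case True
  then show ?thesis using that idempotent_latin_square_midpoint_mod by blast
next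
  case False
  show ?thesis
  proof (cases n)
    case 0
    then show ?thesis using that unfolding idempotent_latin_square_def by simp
  next
    case (Suc q)
    then have "odd q" "3 \<le> q" using False assms by (auto elim: oddE)
    then show ?thesis using that idempotent_latin_square_prolongation_midpoint_mod Suc by blast
  qed
qed

section \<open>The direct product of a complete graph and a bipartite graph\<close>

lemma edge_complete_graph_iff: "{u, w} \<in> edges (complete_graph n) \<longleftrightarrow> u < n \<and> w < n \<and> u \<noteq> w"
  unfolding complete_graph_def edges_def by (auto simp: doubleton_eq_iff)

lemma edges_direct_product_iff:
  "e \<in> edges (direct_product G H) \<longleftrightarrow>
     (\<exists>u v u' v'. e = {(u, v), (u', v')} \<and> {u, u'} \<in> edges G \<and> {v, v'} \<in> edges H)"
  unfolding direct_product_def edges_def by simp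

lemma finite_simple_graph_complete_graph: "finite_simple_graph (complete_graph n)"
  unfolding finite_simple_graph_def complete_graph_def verts_def edges_def by auto

lemma finite_simple_graph_direct_product:
  assumes G: "finite_simple_graph G" and H: "finite_simple_graph H"
  shows "finite_simple_graph (direct_product G H)"
  unfolding finite_simple_graph_def
proof (intro conjI ballI)
  show "finite (verts (direct_product G H))"
    using finite_simple_graph_finite_verts[OF G] finite_simple_graph_finite_verts[OF H]
    unfolding direct_product_def verts_def by simp
next
  fix e assume "e \<in> edges (direct_product G H)"
  then obtain u v u' v' where e: "e = {(u, v), (u', v')}" "{u, u'} \<in> edges G" "{v, v'} \<in> edges H"
    unfolding edges_direct_product_iff by blast
  have "u \<noteq> u' \<and> u \<in> verts G \<and> u' \<in> verts G"
    using e(2) by (elim finite_simple_graph_edgeE[OF G]) (auto simp: doubleton_eq_iff)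
  moreover have "v \<in> verts H \<and> v' \<in> verts H"
    using e(3) by (elim finite_simple_graph_edgeE[OF H]) (auto simp: doubleton_eq_iff)
  ultimately show "\<exists>x y. e = {x, y} \<and> x \<noteq> y \<and> x \<in> verts (direct_product G H) \<and> y \<in> verts (direct_product G H)"
    using e(1) unfolding direct_product_def verts_def by auto
qed

lemma degree_eq_card_adj:
  assumes "finite_simple_graph G"
  shows "degree G u = card {w. adj G u w}"
proof -
  have "inj_on (\<lambda>w. {u, w}) {w. adj G u w}" by (rule inj_onI) (auto simp: doubleton_eq_iff)
  moreover have "(\<lambda>w. {u, w}) ` {w. adj G u w} = {e \<in> edges G. u \<in> e}"
  proof
    show "(\<lambda>w. {u, w}) ` {w. adj G u w} \<subseteq> {e \<in> edges G. u \<in> e}" unfolding adj_def by auto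
    show "{e \<in> edges G. u \<in> e} \<subseteq> (\<lambda>w. {u, w}) ` {w. adj G u w}"
    proof
      fix e assume e: "e \<in> {e \<in> edges G. u \<in> e}"
      then obtain a b where "e = {a, b}" by (auto elim: finite_simple_graph_edgeE[OF assms])
      then have "e = {u, b} \<or> e = {u, a}" using e by auto
      then show "e \<in> (\<lambda>w. {u, w}) ` {w. adj G u w}" using e unfolding adj_def by auto
    qed
  qed
  ultimately show ?thesis unfolding degree_def by (metis card_image)
qed

lemma degree_complete_graph: "u < n \<Longrightarrow> degree (complete_graph n) u = n - 1"
proof -
  assume "u < n"
  have "{w. adj (complete_graph n) u w} = {..<n} - {u}"
    unfolding adj_def edge_complete_graph_iff using \<open>u < n\<close> by auto
  then show ?thesis using \<open>u < n\<close> by (simp add: degree_eq_card_adj[OF finite_simple_graph_complete_graph])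
qed

lemma degree_direct_product_ge:
  assumes "finite_simple_graph G" "finite_simple_graph H"
  shows "degree G u * degree H v \<le> degree (direct_product G H) (u, v)"
proof -
  let ?P = "direct_product G H"
  have "inj_on (\<lambda>x. {(u, v), x}) ({w. adj G u w} \<times> {w. adj H v w})"
    by (rule inj_onI) (auto simp: doubleton_eq_iff)
  moreover have "(\<lambda>x. {(u, v), x}) ` ({w. adj G u w} \<times> {w. adj H v w}) \<subseteq> {e \<in> edges ?P. (u, v) \<in> e}"
    unfolding adj_def edges_direct_product_iff by blast
  moreover have "finite {e \<in> edges ?P. (u, v) \<in> e}"
    using finite_simple_graph_finite_edges[OF finite_simple_graph_direct_product[OF assms]] by simp
  ultimately show ?thesis
    using card_inj_on_le degree_eq_card_adj[OF assms(1)] degree_eq_card_adj[OF assms(2)]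
    unfolding degree_def[of ?P] by (fastforce simp: card_cartesian_product)
qed

lemma max_degree_direct_product_complete_graph_ge:
  assumes "finite_simple_graph H" "verts H \<noteq> {}" "1 \<le> n"
  shows "(n - 1) * max_degree H \<le> max_degree (direct_product (complete_graph n) H)"
proof -
  obtain v where "v \<in> verts H" "degree H v = max_degree H" using max_degree_attained[OF assms(1,2)] .
  then have "(n - 1) * max_degree H \<le> degree (direct_product (complete_graph n) H) (0, v)"
    using degree_direct_product_ge[OF finite_simple_graph_complete_graph[of n] assms(1), where u = 0 and v = v] assms(3)
    by (simp add: degree_complete_graph)
  also have "\<dots> \<le> max_degree (direct_product (complete_graph n) H)"
    by (rule degree_le_max_degree[OF finite_simple_graph_direct_product[OF finite_simple_graph_complete_graph assms(1)]])
  finally show ?thesis .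
qed

definition cyclic_offset :: "nat \<Rightarrow> nat \<Rightarrow> nat \<Rightarrow> nat" where
  "cyclic_offset n u w = (w + n - u) mod n"

lemma cyclic_offset_bounds:
  assumes "u < n" "w < n" "u \<noteq> w"
  shows "0 < cyclic_offset n u w" "cyclic_offset n u w < n"
proof -
  show "cyclic_offset n u w < n" using assms unfolding cyclic_offset_def by simp
  have "\<not> [w + (n - u) = u + (n - u)] (mod n)"
    using assms cong_add_rcancel_nat cong_less_modulus_unique_nat by blast
  then show "0 < cyclic_offset n u w" using assms unfolding cyclic_offset_def cong_def by simp
qed

lemma cyclic_offset_inj:
  assumes "u1 < n" "w1 < n" "u2 < n" "w2 < n" "u1 = u2 \<or> w1 = w2"
    and "cyclic_offset n u1 w1 = cyclic_offset n u2 w2"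
  shows "u1 = u2 \<and> w1 = w2"
proof -
  have "[w1 + n - u1 = w2 + n - u2] (mod n)" using assms(6) unfolding cyclic_offset_def cong_def .
  then have "[(w1 + n - u1) + (u1 + u2) = (w2 + n - u2) + (u1 + u2)] (mod n)" by (rule cong_add) simp
  then have "[(w1 + n) + u2 = (w2 + n) + u1] (mod n)" using assms(1,3) by (simp add: ac_simps)
  then have "[w1 + u2 = w2 + u1] (mod n)" by (simp add: cong_def ac_simps)
  then show ?thesis
    using assms(1-5) cong_add_lcancel_nat cong_add_rcancel_nat cong_less_modulus_unique_nat by metis
qed

lemma mult_add_eq_mult_add_cancel:
  fixes k1 k2 m d1 d2 :: nat
  assumes "k1 * m + d1 = k2 * m + d2" "0 < d1" "d1 \<le> m" "0 < d2" "d2 \<le> m"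
  shows "k1 = k2 \<and> d1 = d2"
proof -
  have quotient: "(r + k * m) div m = k" if "r < m" for k r using that by simp
  have "d1 - 1 + k1 * m = d2 - 1 + k2 * m" "d1 - 1 < m" "d2 - 1 < m" using assms by simp_all
  then have "k1 = k2" using quotient by metis
  then show ?thesis using assms(1) by simp
qed

definition product_colour :: "nat \<Rightarrow> (nat \<Rightarrow> nat \<Rightarrow> nat) \<Rightarrow> nat \<Rightarrow> nat \<Rightarrow> nat \<Rightarrow> nat" where
  "product_colour n L u w k = (if k = 0 then L u w else k * (n - 1) + cyclic_offset n u w)"

lemma product_colour_ge:
  assumes "u < n" "w < n" "u \<noteq> w" "k \<noteq> 0"
  shows "n \<le> product_colour n L u w k"
proof -
  have "1 * (n - 1) \<le> k * (n - 1)" using assms(4) by (intro mult_le_mono1) simp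
  moreover have "product_colour n L u w k = k * (n - 1) + cyclic_offset n u w"
    using assms(4) unfolding product_colour_def by simp
  ultimately show ?thesis using cyclic_offset_bounds[OF assms(1-3)] by linarith
qed

lemma product_colour_not_endpoint:
  assumes "idempotent_latin_square n L" "u < n" "w < n" "u \<noteq> w"
  shows "product_colour n L u w k \<noteq> u" "product_colour n L u w k \<noteq> w"
proof -
  have "product_colour n L u w k \<noteq> u \<and> product_colour n L u w k \<noteq> w"
  proof (cases "k = 0")
    case True
    then show ?thesis using idempotent_latin_square_off_diagonal[OF assms] unfolding product_colour_def by simp
  next
    case False
    then have "n \<le> product_colour n L u w k" by (rule product_colour_ge[OF assms(2-4)])
    with assms(2,3) show ?thesis by auto
  qed
  then show "product_colour n L u w k \<noteq> u" "product_colour n L u w k \<noteq> w" by simp_all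
qed

lemma product_colour_less:
  assumes "idempotent_latin_square n L" "u < n" "w < n" "u \<noteq> w" "k < D"
  shows "product_colour n L u w k < (n - 1) * D + 1"
proof (cases "k = 0")
  case True
  then have "product_colour n L u w k < n"
    using assms unfolding idempotent_latin_square_def product_colour_def by simp
  moreover have "n - 1 \<le> (n - 1) * D" using assms(5) by simp
  ultimately show ?thesis by linarith
next
  case False
  have "(k + 1) * (n - 1) \<le> D * (n - 1)" using assms(5) by (intro mult_le_mono1) simp
  then show ?thesis
    using False cyclic_offset_bounds[OF assms(2-4)] unfolding product_colour_def by (simp add: algebra_simps)
qed

lemma product_colour_inj:
  assumes L: "idempotent_latin_square n L"
    and "u1 < n" "w1 < n" "u1 \<noteq> w1" "u2 < n" "w2 < n" "u2 \<noteq> w2" and shared: "u1 = u2 \<or> w1 = w2"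
    and eq: "product_colour n L u1 w1 k1 = product_colour n L u2 w2 k2"
  shows "u1 = u2 \<and> w1 = w2 \<and> k1 = k2"
proof -
  have block_0: "k = 0 \<longleftrightarrow> product_colour n L u w k < n" if "u < n" "w < n" "u \<noteq> w" for u w k
  proof (cases "k = 0")
    case True
    then show ?thesis using L that unfolding idempotent_latin_square_def product_colour_def by simp
  next
    case False
    then show ?thesis using product_colour_ge[OF that False, of L] by simp
  qed
  have "k1 = 0 \<longleftrightarrow> k2 = 0" using block_0[OF assms(2-4)] block_0[OF assms(5-7)] eq by simp
  show ?thesis
  proof (cases "k1 = 0")
    case True
    then have "L u1 w1 = L u2 w2" "k1 = k2"
      using eq \<open>k1 = 0 \<longleftrightarrow> k2 = 0\<close> unfolding product_colour_def by simp_all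
    moreover have "inj_on (L u1) {..<n}" "inj_on (\<lambda>u. L u w1) {..<n}"
      using L assms(2,3) unfolding idempotent_latin_square_def by simp_all
    ultimately show ?thesis using shared assms(2,3,5,6) by (auto dest: inj_onD)
  next
    case False
    then have "k1 * (n - 1) + cyclic_offset n u1 w1 = k2 * (n - 1) + cyclic_offset n u2 w2"
      using eq \<open>k1 = 0 \<longleftrightarrow> k2 = 0\<close> unfolding product_colour_def by simp
    then have "k1 = k2 \<and> cyclic_offset n u1 w1 = cyclic_offset n u2 w2"
      using cyclic_offset_bounds[OF assms(2-4)] cyclic_offset_bounds[OF assms(5-7)]
      by (intro mult_add_eq_mult_add_cancel) auto
    then show ?thesis using cyclic_offset_inj[OF assms(2,3,5,6) shared] by simp
  qed
qed

definition endpoint_in :: "'b set \<Rightarrow> ('a \<times> 'b) set \<Rightarrow> 'a \<times> 'b" where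
  "endpoint_in A e = (THE p. p \<in> e \<and> snd p \<in> A)"

lemma endpoint_in_edge:
  assumes "A \<inter> B = {}" "a \<in> A" "b \<in> B"
  shows "endpoint_in A {(u, a), (w, b)} = (u, a)" "endpoint_in B {(u, a), (w, b)} = (w, b)"
  unfolding endpoint_in_def by (rule the_equality; use assms in auto)+

definition product_edge_colouring ::
    "nat \<Rightarrow> (nat \<Rightarrow> nat \<Rightarrow> nat) \<Rightarrow> 'a set \<Rightarrow> 'a set \<Rightarrow> ('a set \<Rightarrow> nat) \<Rightarrow> (nat \<times> 'a) set \<Rightarrow> nat" where
  "product_edge_colouring n L A B c e =
     (let (u, a) = endpoint_in A e; (w, b) = endpoint_in B e in product_colour n L u w (c {a, b}))"

lemma product_edge_colouring_edge:
  "A \<inter> B = {} \<Longrightarrow> a \<in> A \<Longrightarrow> b \<in> B \<Longrightarrow>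
    product_edge_colouring n L A B c {(u, a), (w, b)} = product_colour n L u w (c {a, b})"
  unfolding product_edge_colouring_def by (simp add: endpoint_in_edge)

lemma edge_direct_product_complete_graphE:
  assumes "e \<in> edges (direct_product (complete_graph n) H)"
    and cross: "\<forall>e\<in>edges H. \<exists>a b. e = {a, b} \<and> a \<in> A \<and> b \<in> B"
  obtains u a w b where "e = {(u, a), (w, b)}" "a \<in> A" "b \<in> B" "{a, b} \<in> edges H" "u < n" "w < n" "u \<noteq> w"
proof -
  obtain u v u' v' where e: "e = {(u, v), (u', v')}" "u < n" "u' < n" "u \<noteq> u'" "{v, v'} \<in> edges H"
    using assms(1) unfolding edges_direct_product_iff edge_complete_graph_iff by blast
  obtain a b where ab: "{v, v'} = {a, b}" "a \<in> A" "b \<in> B" using cross e(5) by blast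
  then consider "v = a" "v' = b" | "v = b" "v' = a" by (auto simp: doubleton_eq_iff)
  then show ?thesis
  proof cases
    case 1
    then show ?thesis using that[of u a u' b] e ab by simp
  next
    case 2
    then show ?thesis using that[of u' a u b] e ab by (simp add: insert_commute)
  qed
qed

lemma product_edge_colouring_adjacent:
  assumes L: "idempotent_latin_square n L" and disj: "A \<inter> B = {}"
    and cross: "\<forall>e\<in>edges H. \<exists>a b. e = {a, b} \<and> a \<in> A \<and> b \<in> B"
    and c: "proper_edge_colouring (edges H) c D"
    and e: "e1 \<in> edges (direct_product (complete_graph n) H)" "e2 \<in> edges (direct_product (complete_graph n) H)"
    and adjacent: "e1 \<noteq> e2" "e1 \<inter> e2 \<noteq> {}"
  shows "product_edge_colouring n L A B c e1 \<noteq> product_edge_colouring n L A B c e2"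
proof
  obtain u1 a1 w1 b1 where e1: "e1 = {(u1, a1), (w1, b1)}" "a1 \<in> A" "b1 \<in> B" "{a1, b1} \<in> edges H"
    "u1 < n" "w1 < n" "u1 \<noteq> w1" by (rule edge_direct_product_complete_graphE[OF e(1) cross])
  obtain u2 a2 w2 b2 where e2: "e2 = {(u2, a2), (w2, b2)}" "a2 \<in> A" "b2 \<in> B" "{a2, b2} \<in> edges H"
    "u2 < n" "w2 < n" "u2 \<noteq> w2" by (rule edge_direct_product_complete_graphE[OF e(2) cross])
  have shared: "(u1, a1) = (u2, a2) \<or> (w1, b1) = (w2, b2)" using adjacent(2) e1 e2 disj by auto
  assume "product_edge_colouring n L A B c e1 = product_edge_colouring n L A B c e2"
  then have "product_colour n L u1 w1 (c {a1, b1}) = product_colour n L u2 w2 (c {a2, b2})"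
    using product_edge_colouring_edge[OF disj] e1(1-3) e2(1-3) by simp
  moreover have "u1 = u2 \<or> w1 = w2" using shared by auto
  ultimately have "u1 = u2" "w1 = w2" "c {a1, b1} = c {a2, b2}"
    using product_colour_inj[OF L e1(5-7) e2(5-7)] by blast+
  moreover have "{a1, b1} = {a2, b2}"
    using proper_edge_colouring_eq[OF c e1(4) e2(4)] \<open>c {a1, b1} = c {a2, b2}\<close> shared by auto
  moreover have "a1 \<noteq> b2" using disj e1(2) e2(3) by blast
  ultimately have "e1 = e2" unfolding e1(1) e2(1) by (auto simp: doubleton_eq_iff)
  then show False using adjacent(1) by simp
qed

lemma total_colouring_direct_product_complete_graph:
  assumes L: "idempotent_latin_square n L" and disj: "A \<inter> B = {}"
    and cross: "\<forall>e\<in>edges H. \<exists>a b. e = {a, b} \<and> a \<in> A \<and> b \<in> B"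
    and c: "proper_edge_colouring (edges H) c D" and "0 < D"
  shows "total_colouring (direct_product (complete_graph n) H) ((n - 1) * D + 1) fst
    (product_edge_colouring n L A B c)"
    (is "total_colouring ?G ?N fst ?g")
  unfolding total_colouring_def
proof (intro conjI ballI allI impI)
  fix x assume "x \<in> verts ?G"
  moreover have "n \<le> ?N" using \<open>0 < D\<close> by (cases n) simp_all
  ultimately show "fst x < ?N" unfolding direct_product_def complete_graph_def verts_def by auto
next
  fix e assume "e \<in> edges ?G"
  then obtain u a w b where "e = {(u, a), (w, b)}" "a \<in> A" "b \<in> B" "{a, b} \<in> edges H" "u < n" "w < n" "u \<noteq> w"
    by (rule edge_direct_product_complete_graphE[OF _ cross])
  then show "?g e < ?N"
    using product_edge_colouring_edge[OF disj] product_colour_less[OF L] c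
    unfolding proper_edge_colouring_def by simp
next
  fix x y assume "{x, y} \<in> edges ?G"
  then obtain u a w b where "{x, y} = {(u, a), (w, b)}" "u \<noteq> w"
    by (rule edge_direct_product_complete_graphE[OF _ cross])
  then show "fst x \<noteq> fst y" by (auto simp: doubleton_eq_iff)
next
  fix e x assume "e \<in> edges ?G" "x \<in> e"
  moreover obtain u a w b where "e = {(u, a), (w, b)}" "a \<in> A" "b \<in> B" "u < n" "w < n" "u \<noteq> w"
    using edge_direct_product_complete_graphE[OF \<open>e \<in> edges ?G\<close> cross] by metis
  ultimately show "?g e \<noteq> fst x"
    using product_edge_colouring_edge[OF disj] product_colour_not_endpoint[OF L] by auto
next
  fix e1 e2 assume "e1 \<in> edges ?G" "e2 \<in> edges ?G" "e1 \<noteq> e2 \<and> e1 \<inter> e2 \<noteq> {}"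
  then show "?g e1 \<noteq> ?g e2" using product_edge_colouring_adjacent[OF L disj cross c] by blast
qed

theorem corollary2:
  fixes n :: nat and H :: "'a graph"
  assumes "n \<ge> 1" and "n \<noteq> 2"
    and "finite_simple_graph H" and "verts H \<noteq> {}" and "bipartite H"
  shows "type_I (direct_product (complete_graph n) H)"
proof -
  let ?G = "direct_product (complete_graph n) H"
  have G: "finite_simple_graph ?G"
    by (rule finite_simple_graph_direct_product[OF finite_simple_graph_complete_graph assms(3)])
  have "verts ?G \<noteq> {}" using assms(1,4) unfolding direct_product_def complete_graph_def verts_def by auto
  note type_I = type_I_if_total_colouring[OF G this]
  show ?thesis
  proof (cases "edges H = {}")
    case True
    then have "edges ?G = {}" by (auto simp: edges_direct_product_iff)
    then show ?thesis by (intro type_I[of 1 "\<lambda>_. 0" "\<lambda>_. 0"]) (auto simp: total_colouring_def)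
  next
    case False
    obtain A B where AB: "A \<inter> B = {}" "\<forall>e\<in>edges H. \<exists>a b. e = {a, b} \<and> a \<in> A \<and> b \<in> B"
      using bipartite_crossing[OF assms(3,5)] .
    obtain c where c: "proper_edge_colouring (edges H) c (max_degree H)"
      using konig_edge_colouring[OF finite_simple_graph_finite_edges[OF assms(3)] AB]
        degree_le_max_degree[OF assms(3)] unfolding degree_def by blast
    obtain L where "idempotent_latin_square n L" using idempotent_latin_square_exists[OF assms(2)] .
    from total_colouring_direct_product_complete_graph[OF this AB c max_degree_pos[OF assms(3) False]]
    show ?thesis
      by (rule type_I) (use max_degree_direct_product_complete_graph_ge[OF assms(3,4,1)] in simp)
  qed
qed

end
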